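(* Let $A$ and $B$ be $2n\times 2n$ real symmetric positive definite matrices. Then there exist a $2n\times2n$ real symplectic matrix $M$ and $n\times n$ diagonal matrices $D_A,D_B$ with positive diagonal entries such that $M^TAM=D_A\otimes I_2$ and $M^TBM=D_B\otimes I_2$ if and only if $AJB=BJA$.
   Context: $J:=I_n\otimes\begin{pmatrix}0&1\\-1&0\end{pmatrix}$, where $I_n$ is the $n\times n$ identity matrix and $\otimes$ is the Kronecker product. A $2n\times2n$ real matrix $M$ is symplectic if $M^TJM=J$. *)

theory Defs
  imports "Jordan_Normal_Form.Matrix"
begin

definition kron_mat :: "'a::times mat \<Rightarrow> 'a mat \<Rightarrow> 'a mat" where
  "kron_mat A B = mat (dim_row A * dim_row B) (dim_col A * dim_col B)
     (\<lambda>(i, j). A $$ (i div dim_row B, j div dim_col B) * B $$ (i mod dim_row B, j mod dim_col B))"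

definition J2 :: "real mat" where
  "J2 = mat_of_rows_list 2 [[0, 1], [-1, 0]]"

definition Jmat :: "nat \<Rightarrow> real mat" where
  "Jmat n = kron_mat (1\<^sub>m n) J2"

definition symplectic :: "nat \<Rightarrow> real mat \<Rightarrow> bool" where
  "symplectic n M \<longleftrightarrow> M \<in> carrier_mat (2*n) (2*n) \<and> transpose_mat M * Jmat n * M = Jmat n"

definition symmetric_mat :: "real mat \<Rightarrow> bool" where
  "symmetric_mat A \<longleftrightarrow> transpose_mat A = A"

definition pos_def_mat :: "nat \<Rightarrow> real mat \<Rightarrow> bool" where
  "pos_def_mat k A \<longleftrightarrow> A \<in> carrier_mat k k \<and> symmetric_mat A \<and>
     (\<forall>x \<in> carrier_vec k. x \<noteq> 0\<^sub>v k \<longrightarrow> x \<bullet> (A *\<^sub>v x) > 0)"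

end

theory Submission
  imports Defs "Jordan_Normal_Form.Char_Poly"
begin

(*
  Write \<omega>(x,y) = x^T J y. If M is symplectic then M J M^T = J, hence
  M^T (A J B) M = (M^T A M) J (M^T B M); and matrices D \<otimes> I_2 with D diagonal satisfy
  D1 J D2 = D2 J D1. So simultaneous diagonalization forces A J B = B J A.

  Conversely, if A J B = B J A then J A and J B commute, and a symplectic basis is built pair
  by pair. Let W be the \<omega>-complement of the pairs chosen so far; since A and B are orthogonal
  between those pairs and W, both J A and J B leave W invariant. A common complex eigenvector
  of J A and J B in W yields real x, y \<in> W on which both act as rotation-scalings. As
  K(w,z) = \<omega>(J K w, z) for K = A, B, this makes K diagonal on x, y with equal entries and
  K-orthogonal to everything \<omega>-orthogonal to x and y; positivity of A forces \<omega>(x,y) \<noteq> 0,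
  and suitably rescaled x, y form the next pair.
*)

section \<open>Bilinear forms and the standard symplectic matrix\<close>

definition bilin :: "'a::comm_ring mat \<Rightarrow> 'a vec \<Rightarrow> 'a vec \<Rightarrow> 'a" where
  "bilin K x y = x \<bullet> (K *\<^sub>v y)"

lemma bilin_transpose:
  assumes "K \<in> carrier_mat N N" "x \<in> carrier_vec N" "y \<in> carrier_vec N"
  shows "bilin (transpose_mat K) x y = bilin K y x"
proof -
  have "x \<bullet> (transpose_mat K *\<^sub>v y) = (transpose_mat K *\<^sub>v y) \<bullet> x"
    using assms by (intro comm_scalar_prod[of _ N]) auto
  then show ?thesis unfolding bilin_def using transpose_vec_mult_scalar[OF assms(1,2,3)] by simp
qed

lemma bilin_symmetric:
  assumes "K \<in> carrier_mat N N" "transpose_mat K = K" "x \<in> carrier_vec N" "y \<in> carrier_vec N"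
  shows "bilin K x y = bilin K y x"
  using bilin_transpose[OF assms(1,3,4)] assms(2) by simp

lemma bilin_add_left:
  "K \<in> carrier_mat N N \<Longrightarrow> x \<in> carrier_vec N \<Longrightarrow> y \<in> carrier_vec N \<Longrightarrow> z \<in> carrier_vec N \<Longrightarrow>
   bilin K (x + y) z = bilin K x z + bilin K y z"
  unfolding bilin_def by (simp add: add_scalar_prod_distrib[of _ N])

lemma bilin_add_right:
  "K \<in> carrier_mat N N \<Longrightarrow> x \<in> carrier_vec N \<Longrightarrow> y \<in> carrier_vec N \<Longrightarrow> z \<in> carrier_vec N \<Longrightarrow>
   bilin K x (y + z) = bilin K x y + bilin K x z"
  unfolding bilin_def by (simp add: mult_add_distrib_mat_vec scalar_prod_add_distrib[of _ N])

lemma bilin_smult_left: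
  "K \<in> carrier_mat N N \<Longrightarrow> x \<in> carrier_vec N \<Longrightarrow> y \<in> carrier_vec N \<Longrightarrow>
   bilin K (c \<cdot>\<^sub>v x) y = c * bilin K x y"
  unfolding bilin_def by (simp add: smult_scalar_prod_distrib[of _ N])

lemma bilin_smult_right:
  fixes K :: "'a::field mat"
  shows "K \<in> carrier_mat N N \<Longrightarrow> x \<in> carrier_vec N \<Longrightarrow> y \<in> carrier_vec N \<Longrightarrow>
   bilin K x (c \<cdot>\<^sub>v y) = c * bilin K x y"
  unfolding bilin_def by (simp add: mult_mat_vec[of K N N])

lemma bilin_zero_left: "K \<in> carrier_mat N N \<Longrightarrow> y \<in> carrier_vec N \<Longrightarrow> bilin K (0\<^sub>v N) y = 0"
  unfolding bilin_def by simp

lemma bilin_uminus: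
  "K \<in> carrier_mat N N \<Longrightarrow> x \<in> carrier_vec N \<Longrightarrow> y \<in> carrier_vec N \<Longrightarrow> bilin (- K) x y = - bilin K x y"
  unfolding bilin_def by simp

lemma bilin_mult_right:
  "K \<in> carrier_mat N N \<Longrightarrow> Y \<in> carrier_mat N N \<Longrightarrow> y \<in> carrier_vec N \<Longrightarrow>
   bilin K x (Y *\<^sub>v y) = bilin (K * Y) x y"
  unfolding bilin_def by simp

lemma congruence_index:
  assumes "M \<in> carrier_mat N N" "K \<in> carrier_mat N N" "i < N" "j < N"
  shows "(transpose_mat M * K * M) $$ (i,j) = bilin K (col M i) (col M j)"
  using assms by (simp add: bilin_def assoc_mult_mat[of _ N N _ N _ N] col_mult2[of _ N N] mult_mat_vec_def)

lemma pos_def_matD: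
  assumes "pos_def_mat k K"
  shows "K \<in> carrier_mat k k" "transpose_mat K = K"
    "\<And>x. x \<in> carrier_vec k \<Longrightarrow> x \<noteq> 0\<^sub>v k \<Longrightarrow> bilin K x x > 0"
  using assms unfolding pos_def_mat_def symmetric_mat_def bilin_def by auto

(* The entries of Jmat n, which do not depend on n. *)
definition J_entry :: "nat \<Rightarrow> nat \<Rightarrow> real" where
  "J_entry i j = (if even i \<and> j = i + 1 then 1 else if even j \<and> i = j + 1 then -1 else 0)"

lemma J_entry_skew: "J_entry j i = - J_entry i j"
  unfolding J_entry_def by auto

lemma J_entry_eq_0: "i div 2 \<noteq> j div 2 \<Longrightarrow> J_entry i j = 0"
  unfolding J_entry_def by auto

lemma J_entry_extend:
  "i < 2*m \<Longrightarrow> J_entry i (2*m) = 0" "i < 2*m \<Longrightarrow> J_entry i (Suc (2*m)) = 0"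
  "i < 2*m \<Longrightarrow> J_entry (2*m) i = 0" "i < 2*m \<Longrightarrow> J_entry (Suc (2*m)) i = 0"
  "J_entry (2*m) (Suc (2*m)) = 1" "J_entry (Suc (2*m)) (2*m) = -1"
  "J_entry (2*m) (2*m) = 0" "J_entry (Suc (2*m)) (Suc (2*m)) = 0"
  unfolding J_entry_def by (auto, presburger+)

lemma J2_dims [simp]: "dim_row J2 = 2" "dim_col J2 = 2"
  by (auto simp: J2_def mat_of_rows_list_def)

lemma Jmat_dims [simp]: "dim_row (Jmat n) = 2*n" "dim_col (Jmat n) = 2*n"
  unfolding Jmat_def kron_mat_def by auto

lemma Jmat_carrier [simp]: "Jmat n \<in> carrier_mat (2*n) (2*n)"
  unfolding carrier_mat_def by simp

lemma J2_index:
  "a < 2 \<Longrightarrow> b < 2 \<Longrightarrow> J2 $$ (a,b) = (if a = 0 \<and> b = 1 then 1 else if a = 1 \<and> b = 0 then -1 else 0)"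
  by (auto simp: J2_def mat_of_rows_list_def less_2_cases_iff)

lemma Jmat_index:
  assumes "i < 2*n" "j < 2*n"
  shows "Jmat n $$ (i,j) = J_entry i j"
proof -
  have "Jmat n $$ (i,j) = (1\<^sub>m n :: real mat) $$ (i div 2, j div 2) * J2 $$ (i mod 2, j mod 2)"
    using assms unfolding Jmat_def kron_mat_def by (simp add: mult.commute[of n])
  also have "\<dots> = J_entry i j"
    using assms by (cases "even i"; cases "even j") (auto elim!: evenE oddE simp: J2_index J_entry_def, presburger+)
  finally show ?thesis .
qed

lemma sum_J_entry_row:
  assumes "i < 2*n"
  shows "(\<Sum>j<2*n. J_entry i j * f j) = (if even i then f (i+1) else - f (i-1))"
proof -
  define k where "k = (if even i then i + 1 else i - 1)"
  have k: "k < 2*n" using assms unfolding k_def by (auto elim!: evenE)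
  have "J_entry i j * f j = (if j = k then (if even i then f k else - f k) else 0)" for j
    unfolding J_entry_def k_def by (auto elim!: oddE)
  then show ?thesis using k by (simp add: k_def)
qed

lemma Jmat_square: "Jmat n * Jmat n = - 1\<^sub>m (2*n)"
proof (rule eq_matI)
  fix i k assume "i < dim_row (- 1\<^sub>m (2*n) :: real mat)" "k < dim_col (- 1\<^sub>m (2*n) :: real mat)"
  then have i: "i < 2*n" and k: "k < 2*n" by auto
  have "(Jmat n * Jmat n) $$ (i,k) = (\<Sum>j<2*n. J_entry i j * J_entry j k)"
    using i k by (simp add: scalar_prod_def Jmat_index atLeast0LessThan)
  also have "\<dots> = (if even i then J_entry (i+1) k else - J_entry (i-1) k)"
    by (rule sum_J_entry_row[OF i])
  also have "\<dots> = (if i = k then -1 else 0)"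
    by (auto simp: J_entry_def elim!: oddE) presburger
  finally show "(Jmat n * Jmat n) $$ (i,k) = (- 1\<^sub>m (2*n)) $$ (i,k)" using i k by simp
qed auto

lemma transpose_Jmat: "transpose_mat (Jmat n) = - Jmat n"
  by (rule eq_matI) (auto simp: Jmat_index intro: J_entry_skew)

lemma bilin_Jmat_skew:
  assumes "x \<in> carrier_vec (2*n)" "y \<in> carrier_vec (2*n)"
  shows "bilin (Jmat n) x y = - bilin (Jmat n) y x"
  using bilin_transpose[OF Jmat_carrier assms] assms
  by (simp add: transpose_Jmat bilin_def)

lemma bilin_Jmat_self: "x \<in> carrier_vec (2*n) \<Longrightarrow> bilin (Jmat n) x x = 0"
  using bilin_Jmat_skew[of x n x] by simp

lemma bilin_Jmat_mult_Jmat_right: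
  assumes K: "K \<in> carrier_mat (2*n) (2*n)" and x: "x \<in> carrier_vec (2*n)" and z: "z \<in> carrier_vec (2*n)"
  shows "bilin (Jmat n) x ((Jmat n * K) *\<^sub>v z) = - bilin K x z"
proof -
  have JK: "Jmat n * K \<in> carrier_mat (2*n) (2*n)" using mult_carrier_mat[OF Jmat_carrier K] .
  have "Jmat n * (Jmat n * K) = - K"
    using K by (simp flip: assoc_mult_mat[OF Jmat_carrier Jmat_carrier K] add: Jmat_square)
  then show ?thesis using bilin_mult_right[OF Jmat_carrier JK z, of x] bilin_uminus[OF K x z] by simp
qed

lemma bilin_Jmat_mult_Jmat_left:
  assumes K: "K \<in> carrier_mat (2*n) (2*n)" "transpose_mat K = K"
    and x: "x \<in> carrier_vec (2*n)" and z: "z \<in> carrier_vec (2*n)"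
  shows "bilin (Jmat n) ((Jmat n * K) *\<^sub>v x) z = bilin K x z"
proof -
  have Kx: "(Jmat n * K) *\<^sub>v x \<in> carrier_vec (2*n)"
    using mult_mat_vec_carrier[OF mult_carrier_mat[OF Jmat_carrier K(1)] x] .
  show ?thesis
    using bilin_Jmat_skew[OF Kx z] bilin_Jmat_mult_Jmat_right[OF K(1) z x] bilin_symmetric[OF K z x]
    by simp
qed

section \<open>Simultaneous symplectic diagonalization implies commutation\<close>

lemma diagonal_mat_eq_mat_diag:
  assumes "D \<in> carrier_mat n n" "diagonal_mat D"
  shows "D = mat_diag n (\<lambda>i. D $$ (i,i))"
  using assms by (intro eq_matI) (auto simp: mat_diag_def diagonal_mat_def)

lemma kron_mat_diag_one:
  fixes f :: "nat \<Rightarrow> 'a::semiring_1"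
  shows "kron_mat (mat_diag n f) (1\<^sub>m 2) = mat_diag (2*n) (\<lambda>i. f (i div 2))"
proof (rule eq_matI)
  fix i j assume "i < dim_row (mat_diag (2*n) (\<lambda>i. f (i div 2)))" "j < dim_col (mat_diag (2*n) (\<lambda>i. f (i div 2)))"
  then have "i < 2*n" "j < 2*n" by (simp_all add: mat_diag_def)
  moreover have "i = j \<longleftrightarrow> i div 2 = j div 2 \<and> i mod 2 = j mod 2" by (metis div_mult_mod_eq)
  ultimately show "kron_mat (mat_diag n f) (1\<^sub>m 2) $$ (i,j) = mat_diag (2*n) (\<lambda>i. f (i div 2)) $$ (i,j)"
    by (auto simp: kron_mat_def mat_diag_def mult.commute[of n])
qed (auto simp: kron_mat_def mat_diag_def)

lemma mat_diag_Jmat_commute: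
  fixes n :: nat and f g :: "nat \<Rightarrow> real"
  defines "F \<equiv> mat_diag (2*n) (\<lambda>i. f (i div 2))" and "G \<equiv> mat_diag (2*n) (\<lambda>i. g (i div 2))"
  shows "F * Jmat n * G = G * Jmat n * F"
proof -
  have "H * Jmat n * K = mat (2*n) (2*n) (\<lambda>(i,j). h (i div 2) * J_entry i j * k (j div 2))"
    if "H = mat_diag (2*n) (\<lambda>i. h (i div 2))" "K = mat_diag (2*n) (\<lambda>i. k (i div 2))" for H K h k
    using that by (intro eq_matI) (auto simp: mat_diag_mult_left[of _ _ "2*n"] mat_diag_mult_right[of _ "2*n"] Jmat_index)
  moreover have "f (i div 2) * J_entry i j * g (j div 2) = g (i div 2) * J_entry i j * f (j div 2)" for i j
    by (cases "i div 2 = j div 2") (auto simp: J_entry_eq_0)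
  ultimately show ?thesis unfolding F_def G_def by (intro eq_matI) auto
qed

(* M^-1 = J^-1 M^T J, and J^-1 = -J. *)
lemma symplectic_inverse:
  assumes "symplectic n M"
  defines "N \<equiv> - (Jmat n * transpose_mat M * Jmat n)"
  shows "N \<in> carrier_mat (2*n) (2*n)" "N * M = 1\<^sub>m (2*n)" "M * N = 1\<^sub>m (2*n)"
proof -
  define J Mt where "J = Jmat n" and "Mt = transpose_mat M"
  have M: "M \<in> carrier_mat (2*n) (2*n)" and MJM: "Mt * J * M = J"
    using assms unfolding symplectic_def J_def Mt_def by auto
  have C: "J \<in> carrier_mat (2*n) (2*n)" "Mt \<in> carrier_mat (2*n) (2*n)" using M unfolding J_def Mt_def by auto
  note assoc = assoc_mult_mat[of _ "2*n" "2*n" _ "2*n" _ "2*n"]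
  show N: "N \<in> carrier_mat (2*n) (2*n)" using M unfolding N_def carrier_mat_def by simp
  have "N * M = - (J * (Mt * J * M))"
    using M C unfolding N_def J_def[symmetric] Mt_def[symmetric] by (simp add: assoc)
  also have "\<dots> = - (J * J)" by (simp only: MJM)
  also have "\<dots> = 1\<^sub>m (2*n)" by (simp add: J_def Jmat_square)
  finally show NM: "N * M = 1\<^sub>m (2*n)" .
  show "M * N = 1\<^sub>m (2*n)" by (rule mat_mult_left_right_inverse[OF N M NM])
qed

lemma symplectic_conj_Jmat:
  assumes "symplectic n M"
  shows "M * Jmat n * transpose_mat M = Jmat n"
proof -
  define J Mt where "J = Jmat n" and "Mt = transpose_mat M"
  have C: "M \<in> carrier_mat (2*n) (2*n)" "J \<in> carrier_mat (2*n) (2*n)" "Mt \<in> carrier_mat (2*n) (2*n)"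
    using assms unfolding symplectic_def J_def Mt_def by auto
  note assoc = assoc_mult_mat[of _ "2*n" "2*n" _ "2*n" _ "2*n"]
  have JJ: "J * J = - 1\<^sub>m (2*n)" unfolding J_def by (rule Jmat_square)
  have MJMtJ: "M * J * Mt * J = - 1\<^sub>m (2*n)"
    using symplectic_inverse(3)[OF assms] C unfolding J_def[symmetric] Mt_def[symmetric]
    by (simp add: assoc) (metis uminus_uminus_mat)
  have "M * J * Mt = - (M * J * Mt * J * J)" using C by (simp add: assoc JJ)
  also have "\<dots> = J" unfolding MJMtJ using C by simp
  finally show ?thesis unfolding J_def Mt_def .
qed

lemma congruence_cancel:
  fixes M :: "'a::comm_ring_1 mat"
  assumes M: "M \<in> carrier_mat k k" and N: "N \<in> carrier_mat k k" and MN: "M * N = 1\<^sub>m k"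
    and X: "X \<in> carrier_mat k k" and Y: "Y \<in> carrier_mat k k"
    and eq: "transpose_mat M * X * M = transpose_mat M * Y * M"
  shows "X = Y"
proof -
  have NtMt: "transpose_mat N * transpose_mat M = 1\<^sub>m k"
    using arg_cong[OF MN, of transpose_mat] M N by (simp add: transpose_mult)
  have "Z = transpose_mat N * (transpose_mat M * Z * M) * N" if "Z \<in> carrier_mat k k" for Z
    using that M N by (simp add: assoc_mult_mat[of _ k k _ k _ k] NtMt MN
        flip: assoc_mult_mat[of "transpose_mat N" k k "transpose_mat M" k])
  from this[OF X] this[OF Y] show ?thesis unfolding eq by simp
qed

lemma symplectic_congruence_mult:
  assumes "symplectic n M" "X \<in> carrier_mat (2*n) (2*n)" "Y \<in> carrier_mat (2*n) (2*n)"
  shows "transpose_mat M * (X * Jmat n * Y) * M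
    = (transpose_mat M * X * M) * Jmat n * (transpose_mat M * Y * M)"
proof -
  have "M \<in> carrier_mat (2*n) (2*n)" using assms(1) unfolding symplectic_def by simp
  note simps = assoc_mult_mat[of _ "2*n" "2*n" _ "2*n" _ "2*n"] mult_carrier_mat[of _ "2*n" "2*n"] this assms(2,3)
  have "(transpose_mat M * X * M) * Jmat n * (transpose_mat M * Y * M)
    = transpose_mat M * X * (M * Jmat n * transpose_mat M) * Y * M"
    by (simp add: simps)
  then show ?thesis unfolding symplectic_conj_Jmat[OF assms(1)] by (simp add: simps)
qed

lemma symplectic_diagonalization_imp_commute:
  assumes M: "symplectic n M"
    and A: "A \<in> carrier_mat (2*n) (2*n)" and B: "B \<in> carrier_mat (2*n) (2*n)"
    and DA: "DA \<in> carrier_mat n n" "diagonal_mat DA" and DB: "DB \<in> carrier_mat n n" "diagonal_mat DB"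
    and HA: "transpose_mat M * A * M = kron_mat DA (1\<^sub>m 2)"
    and HB: "transpose_mat M * B * M = kron_mat DB (1\<^sub>m 2)"
  shows "A * Jmat n * B = B * Jmat n * A"
proof (rule congruence_cancel)
  have kron: "kron_mat D (1\<^sub>m 2) = mat_diag (2*n) (\<lambda>i. D $$ (i div 2, i div 2))"
    if "D \<in> carrier_mat n n" "diagonal_mat D" for D :: "real mat"
  proof -
    have "kron_mat D (1\<^sub>m 2) = kron_mat (mat_diag n (\<lambda>i. D $$ (i,i))) (1\<^sub>m 2)"
      using diagonal_mat_eq_mat_diag[OF that] by (rule arg_cong)
    also have "\<dots> = mat_diag (2*n) (\<lambda>i. D $$ (i div 2, i div 2))" by (rule kron_mat_diag_one)
    finally show ?thesis .
  qed
  show "transpose_mat M * (A * Jmat n * B) * M = transpose_mat M * (B * Jmat n * A) * M"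
    unfolding symplectic_congruence_mult[OF M A B] symplectic_congruence_mult[OF M B A] HA HB
      kron[OF DA] kron[OF DB] by (rule mat_diag_Jmat_commute)
  show "M \<in> carrier_mat (2*n) (2*n)" using M unfolding symplectic_def by simp
  show "M * - (Jmat n * transpose_mat M * Jmat n) = 1\<^sub>m (2*n)" by (rule symplectic_inverse(3)[OF M])
  show "- (Jmat n * transpose_mat M * Jmat n) \<in> carrier_mat (2*n) (2*n)" by (rule symplectic_inverse(1)[OF M])
  show "A * Jmat n * B \<in> carrier_mat (2*n) (2*n)" "B * Jmat n * A \<in> carrier_mat (2*n) (2*n)"
    using mult_carrier_mat[OF mult_carrier_mat[OF A Jmat_carrier] B]
      mult_carrier_mat[OF mult_carrier_mat[OF B Jmat_carrier] A] .
qed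

section \<open>Common eigenvectors on invariant subspaces\<close>

(* Padding A with zero rows gives a singular square matrix with the same kernel. *)
lemma exists_nonzero_kernel_vec:
  fixes A :: "'a::field mat"
  assumes A: "A \<in> carrier_mat nr nc" and lt: "nr < nc"
  shows "\<exists>v. v \<in> carrier_vec nc \<and> v \<noteq> 0\<^sub>v nc \<and> A *\<^sub>v v = 0\<^sub>v nr"
proof -
  define r where "r i = (if i < nr then row A i else 0\<^sub>v nc)" for i
  define A' where "A' = mat\<^sub>r nc nc (\<lambda>i. if i = nc - 1 then 0\<^sub>v nc else r i)"
  have A': "A' \<in> carrier_mat nc nc" unfolding A'_def by auto
  have "det A' = 0" unfolding A'_def
    by (rule det_row_0) (use lt A in \<open>auto simp: r_def\<close>)
  then obtain v where v: "v \<in> carrier_vec nc" "v \<noteq> 0\<^sub>v nc" "A' *\<^sub>v v = 0\<^sub>v nc"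
    using det_0_iff_vec_prod_zero_field[OF A'] by auto
  have "A *\<^sub>v v = 0\<^sub>v nr"
  proof (rule eq_vecI)
    fix i assume "i < dim_vec (0\<^sub>v nr :: 'a vec)"
    then have "i < nr" by simp
    then show "(A *\<^sub>v v) $ i = 0\<^sub>v nr $ i"
      using arg_cong[OF v(3), of "\<lambda>w. w $ i"] lt A unfolding A'_def r_def by (auto split: if_split_asm)
  qed (use A in auto)
  with v show ?thesis by auto
qed

definition poly_mat_vec :: "'a::comm_ring_1 mat \<Rightarrow> 'a poly \<Rightarrow> 'a vec \<Rightarrow> 'a vec" where
  "poly_mat_vec X p v = vec (dim_vec v) (\<lambda>i. \<Sum>j\<le>degree p. coeff p j * (((*\<^sub>v) X ^^ j) v) $ i)"

lemma poly_mat_vec_bound: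
  assumes "degree p < k"
  shows "poly_mat_vec X p v = vec (dim_vec v) (\<lambda>i. \<Sum>j<k. coeff p j * (((*\<^sub>v) X ^^ j) v) $ i)"
  unfolding poly_mat_vec_def
  by (intro eq_vecI) (auto intro!: sum.mono_neutral_left le_degree, use assms in auto)

lemma poly_mat_vec_carrier [simp]: "v \<in> carrier_vec n \<Longrightarrow> poly_mat_vec X p v \<in> carrier_vec n"
  unfolding poly_mat_vec_def by auto

lemma poly_mat_vec_add:
  "poly_mat_vec X (p + q) v = poly_mat_vec X p v + poly_mat_vec X q v"
proof -
  define k where "k = Suc (max (degree p) (degree q))"
  have "degree (p + q) < k" "degree p < k" "degree q < k"
    using degree_add_le_max[of p q] unfolding k_def by auto
  then show ?thesis by (simp only: poly_mat_vec_bound) (auto simp: sum.distrib algebra_simps)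
qed

lemma poly_mat_vec_smult: "poly_mat_vec X (smult c p) v = c \<cdot>\<^sub>v poly_mat_vec X p v"
proof -
  have "degree (smult c p) < Suc (degree p)" "degree p < Suc (degree p)"
    using degree_smult_le[of c p] by auto
  then show ?thesis
    by (simp only: poly_mat_vec_bound) (auto simp: sum_distrib_left algebra_simps)
qed

lemma poly_mat_vec_1: "poly_mat_vec X 1 v = v"
  unfolding poly_mat_vec_def by auto

lemma mult_mat_vec_index_sum:
  "X \<in> carrier_mat n n \<Longrightarrow> w \<in> carrier_vec n \<Longrightarrow> i < n \<Longrightarrow> (X *\<^sub>v w) $ i = (\<Sum>k<n. X $$ (i,k) * w $ k)"
  by (auto simp: scalar_prod_def atLeast0LessThan)

lemma poly_mat_vec_pCons_0:
  assumes X: "X \<in> carrier_mat n n" and v: "v \<in> carrier_vec n"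
  shows "poly_mat_vec X (pCons 0 p) v = X *\<^sub>v poly_mat_vec X p v"
proof -
  define k where "k = Suc (degree p)"
  define f where "f j = ((*\<^sub>v) X ^^ j) v" for j
  have f: "f j \<in> carrier_vec n" "f (Suc j) = X *\<^sub>v f j" for j
    unfolding f_def by (induction j) (use X v in auto)
  have "degree (pCons 0 p) < Suc k" "degree p < k"
    unfolding k_def by (auto simp: degree_pCons_le le_imp_less_Suc)
  then have lhs: "poly_mat_vec X (pCons 0 p) v = vec n (\<lambda>i. \<Sum>j<k. coeff p j * f (Suc j) $ i)"
    and rhs: "poly_mat_vec X p v = vec n (\<lambda>i. \<Sum>j<k. coeff p j * f j $ i)"
    using v by (simp_all only: poly_mat_vec_bound sum.lessThan_Suc_shift f_def) simp_all
  show ?thesis unfolding lhs rhs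
  proof (rule eq_vecI)
    fix i assume "i < dim_vec (X *\<^sub>v vec n (\<lambda>i. \<Sum>j<k. coeff p j * f j $ i))"
    then have i: "i < n" using X by simp
    have "(\<Sum>j<k. coeff p j * f (Suc j) $ i) = (\<Sum>j<k. \<Sum>l<n. coeff p j * (X $$ (i,l) * f j $ l))"
      by (simp add: f mult_mat_vec_index_sum[OF X _ i] sum_distrib_left)
    also have "\<dots> = (\<Sum>l<n. X $$ (i,l) * (\<Sum>j<k. coeff p j * f j $ l))"
      by (subst sum.swap) (simp add: sum_distrib_left algebra_simps)
    finally show "vec n (\<lambda>i. \<Sum>j<k. coeff p j * f (Suc j) $ i) $ i
      = (X *\<^sub>v vec n (\<lambda>i. \<Sum>j<k. coeff p j * f j $ i)) $ i"
      using i by (subst mult_mat_vec_index_sum[OF X _ i]) auto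
  qed (use X in simp)
qed

lemma poly_mat_vec_pCons:
  assumes X: "X \<in> carrier_mat n n" and v: "v \<in> carrier_vec n"
  shows "poly_mat_vec X (pCons a p) v = a \<cdot>\<^sub>v v + X *\<^sub>v poly_mat_vec X p v"
proof -
  have "pCons a p = smult a 1 + pCons 0 p" by simp
  then show ?thesis
    by (simp only: poly_mat_vec_add poly_mat_vec_smult poly_mat_vec_1 poly_mat_vec_pCons_0[OF X v])
qed

lemma poly_mat_vec_linear_factor:
  assumes X: "X \<in> carrier_mat n n" and v: "v \<in> carrier_vec n"
  shows "poly_mat_vec X ([:-c, 1:] * p) v = X *\<^sub>v poly_mat_vec X p v + (-c) \<cdot>\<^sub>v poly_mat_vec X p v"
proof -
  have "[:-c, 1:] * p = pCons 0 p + smult (-c) p" by simp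
  then show ?thesis
    by (simp only: poly_mat_vec_add poly_mat_vec_smult poly_mat_vec_pCons_0[OF X v])
qed

lemma exists_annihilating_poly:
  fixes X :: "'a::field mat"
  assumes X: "X \<in> carrier_mat n n" and z: "z \<in> carrier_vec n"
  shows "\<exists>p. p \<noteq> 0 \<and> poly_mat_vec X p z = 0\<^sub>v n"
proof -
  define K where "K = mat n (Suc n) (\<lambda>(i,j). (((*\<^sub>v) X ^^ j) z) $ i)"
  obtain c where c: "c \<in> carrier_vec (Suc n)" "c \<noteq> 0\<^sub>v (Suc n)" "K *\<^sub>v c = 0\<^sub>v n"
    using exists_nonzero_kernel_vec[of K n "Suc n"] unfolding K_def by auto
  define p where "p = Poly (list_of_vec c)"
  have coeff_p: "coeff p j = (if j < Suc n then c $ j else 0)" for j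
    unfolding p_def using c(1) by (auto simp: nth_default_def)
  have deg: "degree p < Suc n" using coeff_p by (intro le_imp_less_Suc degree_le) auto
  have "p \<noteq> 0"
  proof
    assume "p = 0"
    then have "c = 0\<^sub>v (Suc n)" using coeff_p c(1) by (intro eq_vecI) (auto, metis)
    with c(2) show False ..
  qed
  moreover have "poly_mat_vec X p z = K *\<^sub>v c"
    unfolding poly_mat_vec_bound[OF deg] K_def using c(1) z
    by (intro eq_vecI) (auto simp: scalar_prod_def coeff_p atLeast0LessThan mult.commute)
  ultimately show ?thesis using c(3) by auto
qed

definition vec_subspace :: "nat \<Rightarrow> 'a::field vec set \<Rightarrow> bool" where
  "vec_subspace n W \<longleftrightarrow> W \<subseteq> carrier_vec n \<and> (\<forall>v\<in>W. \<forall>w\<in>W. v + w \<in> W) \<and> (\<forall>c. \<forall>v\<in>W. c \<cdot>\<^sub>v v \<in> W)"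

lemma poly_mat_vec_in_subspace:
  assumes X: "X \<in> carrier_mat n n" and W: "vec_subspace n W" and inv: "\<forall>w\<in>W. X *\<^sub>v w \<in> W"
    and z: "z \<in> W"
  shows "poly_mat_vec X p z \<in> W"
proof (induction p)
  case 0
  have "poly_mat_vec X 0 z = 0 \<cdot>\<^sub>v z" unfolding poly_mat_vec_def by auto
  then show ?case using W z unfolding vec_subspace_def by metis
next
  case (pCons a p)
  then show ?case
    using W z inv poly_mat_vec_pCons[OF X, of z] unfolding vec_subspace_def by auto
qed

lemma eigenvector_from_linear_factors:
  assumes X: "X \<in> carrier_mat n n" and z: "z \<in> carrier_vec n"
  shows "poly_mat_vec X q z \<noteq> 0\<^sub>v n \<Longrightarrow> poly_mat_vec X (q * (\<Prod>a\<leftarrow>as. [:-a, 1:])) z = 0\<^sub>v n \<Longrightarrow>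
    \<exists>q' \<mu>. poly_mat_vec X q' z \<noteq> 0\<^sub>v n \<and> X *\<^sub>v poly_mat_vec X q' z = \<mu> \<cdot>\<^sub>v poly_mat_vec X q' z"
proof (induction as arbitrary: q)
  case (Cons a as)
  show ?case
  proof (cases "poly_mat_vec X ([:-a, 1:] * q) z = 0\<^sub>v n")
    case True
    define w where "w = poly_mat_vec X q z"
    have w: "w \<in> carrier_vec n" unfolding w_def using z by simp
    have "X *\<^sub>v w + (-a) \<cdot>\<^sub>v w = 0\<^sub>v n"
      using True unfolding poly_mat_vec_linear_factor[OF X z] w_def .
    moreover have "X *\<^sub>v w = (X *\<^sub>v w + (-a) \<cdot>\<^sub>v w) + a \<cdot>\<^sub>v w"
      using X w by (intro eq_vecI) auto
    ultimately have "X *\<^sub>v w = a \<cdot>\<^sub>v w" using w by simp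
    then show ?thesis using Cons.prems(1) unfolding w_def by blast
  next
    case False
    have "q * (\<Prod>a\<leftarrow>a # as. [:-a, 1:]) = ([:-a, 1:] * q) * (\<Prod>a\<leftarrow>as. [:-a, 1:])"
      by (simp only: list.map prod_list.Cons ac_simps)
    then show ?thesis using Cons.IH[OF False] Cons.prems(2) by simp
  qed
qed simp

lemma invariant_subspace_eigenvector:
  fixes X :: "complex mat"
  assumes X: "X \<in> carrier_mat n n" and W: "vec_subspace n W" and inv: "\<forall>w\<in>W. X *\<^sub>v w \<in> W"
    and z: "z \<in> W" "z \<noteq> 0\<^sub>v n"
  shows "\<exists>w \<mu>. w \<in> W \<and> w \<noteq> 0\<^sub>v n \<and> X *\<^sub>v w = \<mu> \<cdot>\<^sub>v w"
proof -
  have zc: "z \<in> carrier_vec n" using W z unfolding vec_subspace_def by auto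
  obtain p where "p \<noteq> 0" and p_z: "poly_mat_vec X p z = 0\<^sub>v n"
    using exists_annihilating_poly[OF X zc] by blast
  obtain as where as: "smult (lead_coeff p) (\<Prod>a\<leftarrow>as. [:-a, 1:]) = p"
    using fundamental_theorem_algebra_factorized[of p] by auto
  have "lead_coeff p \<noteq> 0" using \<open>p \<noteq> 0\<close> by simp
  then have "(\<Prod>a\<leftarrow>as. [:-a, 1:]) = smult (inverse (lead_coeff p)) p"
    by (metis as smult_smult left_inverse smult_1_left)
  then have "poly_mat_vec X (\<Prod>a\<leftarrow>as. [:-a, 1:]) z = inverse (lead_coeff p) \<cdot>\<^sub>v 0\<^sub>v n"
    by (simp add: poly_mat_vec_smult p_z)
  also have "\<dots> = 0\<^sub>v n" by (intro eq_vecI) auto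
  finally have "poly_mat_vec X (1 * (\<Prod>a\<leftarrow>as. [:-a, 1:])) z = 0\<^sub>v n" by simp
  moreover have "poly_mat_vec X 1 z \<noteq> 0\<^sub>v n" using z(2) by (simp add: poly_mat_vec_1)
  ultimately obtain q \<mu> where "poly_mat_vec X q z \<noteq> 0\<^sub>v n"
    "X *\<^sub>v poly_mat_vec X q z = \<mu> \<cdot>\<^sub>v poly_mat_vec X q z"
    using eigenvector_from_linear_factors[OF X zc] by blast
  then show ?thesis using poly_mat_vec_in_subspace[OF X W inv z(1)] by blast
qed

lemma vec_subspace_eigenspace:
  assumes X: "X \<in> carrier_mat n n" and W: "vec_subspace n W"
  shows "vec_subspace n {w \<in> W. X *\<^sub>v w = \<alpha> \<cdot>\<^sub>v w}"
  unfolding vec_subspace_def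
proof (intro conjI ballI allI)
  show "{w \<in> W. X *\<^sub>v w = \<alpha> \<cdot>\<^sub>v w} \<subseteq> carrier_vec n" using W unfolding vec_subspace_def by auto
  fix v w c assume "v \<in> {w \<in> W. X *\<^sub>v w = \<alpha> \<cdot>\<^sub>v w}" "w \<in> {w \<in> W. X *\<^sub>v w = \<alpha> \<cdot>\<^sub>v w}"
  then have v: "v \<in> W" "v \<in> carrier_vec n" "X *\<^sub>v v = \<alpha> \<cdot>\<^sub>v v"
    and w: "w \<in> W" "w \<in> carrier_vec n" "X *\<^sub>v w = \<alpha> \<cdot>\<^sub>v w" using W unfolding vec_subspace_def by auto
  have "X *\<^sub>v (v + w) = \<alpha> \<cdot>\<^sub>v (v + w)"
    using v w X by (simp add: mult_add_distrib_mat_vec smult_add_distrib_vec)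
  then show "v + w \<in> {w \<in> W. X *\<^sub>v w = \<alpha> \<cdot>\<^sub>v w}" using W v w unfolding vec_subspace_def by simp
  have "X *\<^sub>v (c \<cdot>\<^sub>v v) = \<alpha> \<cdot>\<^sub>v (c \<cdot>\<^sub>v v)"
    using v X by (simp add: mult_mat_vec smult_smult_assoc mult.commute)
  then show "c \<cdot>\<^sub>v v \<in> {w \<in> W. X *\<^sub>v w = \<alpha> \<cdot>\<^sub>v w}" using W v unfolding vec_subspace_def by simp
qed

lemma invariant_subspace_common_eigenvector:
  fixes X Y :: "complex mat"
  assumes X: "X \<in> carrier_mat n n" and Y: "Y \<in> carrier_mat n n" and XY: "X * Y = Y * X"
    and W: "vec_subspace n W" and inv: "\<forall>w\<in>W. X *\<^sub>v w \<in> W" "\<forall>w\<in>W. Y *\<^sub>v w \<in> W"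
    and z: "z \<in> W" "z \<noteq> 0\<^sub>v n"
  shows "\<exists>w \<alpha> \<beta>. w \<in> W \<and> w \<noteq> 0\<^sub>v n \<and> X *\<^sub>v w = \<alpha> \<cdot>\<^sub>v w \<and> Y *\<^sub>v w = \<beta> \<cdot>\<^sub>v w"
proof -
  obtain w1 \<alpha> where w1: "w1 \<in> W" "w1 \<noteq> 0\<^sub>v n" "X *\<^sub>v w1 = \<alpha> \<cdot>\<^sub>v w1"
    using invariant_subspace_eigenvector[OF X W inv(1) z] by blast
  define E where "E = {w \<in> W. X *\<^sub>v w = \<alpha> \<cdot>\<^sub>v w}"
  have Wc: "w \<in> carrier_vec n" if "w \<in> W" for w using W that unfolding vec_subspace_def by auto
  have "vec_subspace n E" unfolding E_def by (rule vec_subspace_eigenspace[OF X W])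
  moreover have "Y *\<^sub>v w \<in> E" if "w \<in> E" for w
  proof -
    have w: "w \<in> W" "w \<in> carrier_vec n" "X *\<^sub>v w = \<alpha> \<cdot>\<^sub>v w" using that Wc unfolding E_def by auto
    have "X *\<^sub>v (Y *\<^sub>v w) = (Y * X) *\<^sub>v w" using X Y w by (simp flip: XY)
    also have "\<dots> = \<alpha> \<cdot>\<^sub>v (Y *\<^sub>v w)" using X Y w by (simp add: mult_mat_vec)
    finally show ?thesis using w inv(2) unfolding E_def by simp
  qed
  ultimately obtain w \<beta> where "w \<in> E" "w \<noteq> 0\<^sub>v n" "Y *\<^sub>v w = \<beta> \<cdot>\<^sub>v w"
    using invariant_subspace_eigenvector[OF Y] w1 unfolding E_def by blast
  then show ?thesis unfolding E_def by blast
qed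

definition complexification :: "nat \<Rightarrow> real vec set \<Rightarrow> complex vec set" where
  "complexification n W = {w \<in> carrier_vec n. map_vec Re w \<in> W \<and> map_vec Im w \<in> W}"

lemma map_vec_Re_smult: "map_vec Re (c \<cdot>\<^sub>v w) = Re c \<cdot>\<^sub>v map_vec Re w + (- Im c) \<cdot>\<^sub>v map_vec Im w"
  by (intro eq_vecI) auto

lemma map_vec_Im_smult: "map_vec Im (c \<cdot>\<^sub>v w) = Im c \<cdot>\<^sub>v map_vec Re w + Re c \<cdot>\<^sub>v map_vec Im w"
  by (intro eq_vecI) auto

lemma map_vec_Re_mult_of_real:
  "M \<in> carrier_mat nr nc \<Longrightarrow> w \<in> carrier_vec nc \<Longrightarrow>
   map_vec Re (map_mat complex_of_real M *\<^sub>v w) = M *\<^sub>v map_vec Re w"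
  by (intro eq_vecI) (auto simp: scalar_prod_def)

lemma map_vec_Im_mult_of_real:
  "M \<in> carrier_mat nr nc \<Longrightarrow> w \<in> carrier_vec nc \<Longrightarrow>
   map_vec Im (map_mat complex_of_real M *\<^sub>v w) = M *\<^sub>v map_vec Im w"
  by (intro eq_vecI) (auto simp: scalar_prod_def)

lemma vec_subspace_complexification:
  assumes "vec_subspace n W"
  shows "vec_subspace n (complexification n W)"
  unfolding vec_subspace_def
proof (intro conjI ballI allI)
  show "complexification n W \<subseteq> carrier_vec n" unfolding complexification_def by auto
  fix v w c assume v: "v \<in> complexification n W" and w: "w \<in> complexification n W"
  have "map_vec Re (v + w) = map_vec Re v + map_vec Re w" "map_vec Im (v + w) = map_vec Im v + map_vec Im w"
    using v w unfolding complexification_def by auto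
  then show "v + w \<in> complexification n W"
    using assms v w unfolding complexification_def vec_subspace_def by auto
  show "c \<cdot>\<^sub>v v \<in> complexification n W"
    using assms v unfolding complexification_def vec_subspace_def
    by (simp add: map_vec_Re_smult map_vec_Im_smult)
qed

lemma complexification_invariant:
  assumes T: "T \<in> carrier_mat n n" and inv: "\<forall>w\<in>W. T *\<^sub>v w \<in> W"
  shows "\<forall>w\<in>complexification n W. map_mat complex_of_real T *\<^sub>v w \<in> complexification n W"
  using assms unfolding complexification_def
  by (simp add: map_vec_Re_mult_of_real[OF T] map_vec_Im_mult_of_real[OF T])

lemma of_real_mat_eigenvector:
  assumes T: "T \<in> carrier_mat n n" and w: "w \<in> carrier_vec n"
    and eig: "map_mat complex_of_real T *\<^sub>v w = \<alpha> \<cdot>\<^sub>v w"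
  shows "T *\<^sub>v map_vec Re w = Re \<alpha> \<cdot>\<^sub>v map_vec Re w + (- Im \<alpha>) \<cdot>\<^sub>v map_vec Im w"
    and "T *\<^sub>v map_vec Im w = Im \<alpha> \<cdot>\<^sub>v map_vec Re w + Re \<alpha> \<cdot>\<^sub>v map_vec Im w"
  by (simp_all flip: map_vec_Re_mult_of_real[OF T w] map_vec_Im_mult_of_real[OF T w]
      add: eig map_vec_Re_smult map_vec_Im_smult)

lemma commuting_invariant_plane:
  fixes T R :: "real mat"
  assumes T: "T \<in> carrier_mat n n" and R: "R \<in> carrier_mat n n" and TR: "T * R = R * T"
    and W: "vec_subspace n W" and inv: "\<forall>w\<in>W. T *\<^sub>v w \<in> W" "\<forall>w\<in>W. R *\<^sub>v w \<in> W"
    and z: "z \<in> W" "z \<noteq> 0\<^sub>v n"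
  shows "\<exists>x y a b c d. x \<in> W \<and> y \<in> W \<and> (x \<noteq> 0\<^sub>v n \<or> y \<noteq> 0\<^sub>v n) \<and>
    T *\<^sub>v x = a \<cdot>\<^sub>v x + (-b) \<cdot>\<^sub>v y \<and> T *\<^sub>v y = b \<cdot>\<^sub>v x + a \<cdot>\<^sub>v y \<and>
    R *\<^sub>v x = c \<cdot>\<^sub>v x + (-d) \<cdot>\<^sub>v y \<and> R *\<^sub>v y = d \<cdot>\<^sub>v x + c \<cdot>\<^sub>v y"
proof -
  let ?C = "map_mat complex_of_real" and ?W = "complexification n W"
  have CT: "?C T \<in> carrier_mat n n" and CR: "?C R \<in> carrier_mat n n" using T R by auto
  have comm: "?C T * ?C R = ?C R * ?C T"
    using TR T R by (metis of_real_hom.mat_hom_mult)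
  have "map_vec complex_of_real z \<in> ?W" "map_vec complex_of_real z \<noteq> 0\<^sub>v n"
  proof -
    have "map_vec Re (map_vec complex_of_real z) = z" "map_vec Im (map_vec complex_of_real z) = 0 \<cdot>\<^sub>v z"
      by auto
    then show "map_vec complex_of_real z \<in> ?W" "map_vec complex_of_real z \<noteq> 0\<^sub>v n"
      using W z unfolding complexification_def vec_subspace_def by (auto dest: arg_cong[of _ _ "map_vec Re"])
  qed
  then obtain w \<alpha> \<beta> where w: "w \<in> ?W" "w \<noteq> 0\<^sub>v n" "?C T *\<^sub>v w = \<alpha> \<cdot>\<^sub>v w" "?C R *\<^sub>v w = \<beta> \<cdot>\<^sub>v w"
    using invariant_subspace_common_eigenvector[OF CT CR comm vec_subspace_complexification[OF W]
      complexification_invariant[OF T inv(1)] complexification_invariant[OF R inv(2)]] by blast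
  have wc: "w \<in> carrier_vec n" using w(1) unfolding complexification_def by simp
  have "map_vec Re w \<noteq> 0\<^sub>v n \<or> map_vec Im w \<noteq> 0\<^sub>v n"
  proof (rule ccontr)
    assume "\<not> ?thesis"
    then have "Re (w $ i) = 0 \<and> Im (w $ i) = 0" if "i < n" for i
      using that wc by (metis index_map_vec(1) index_zero_vec(1) carrier_vecD)
    then have "w = 0\<^sub>v n" using wc by (intro eq_vecI) (auto simp: complex_eq_iff)
    with w(2) show False ..
  qed
  moreover have "map_vec Re w \<in> W" "map_vec Im w \<in> W" using w(1) unfolding complexification_def by auto
  ultimately show ?thesis
    using of_real_mat_eigenvector[OF T wc w(3)] of_real_mat_eigenvector[OF R wc w(4)] by blast
qed

section \<open>Symplectic frames\<close>

definition symp_compl :: "nat \<Rightarrow> nat \<Rightarrow> (nat \<Rightarrow> real vec) \<Rightarrow> real vec set" where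
  "symp_compl n m b = {z \<in> carrier_vec (2*n). \<forall>l<2*m. bilin (Jmat n) (b l) z = 0}"

lemma vec_subspace_symp_compl:
  assumes "\<forall>l<2*m. b l \<in> carrier_vec (2*n)"
  shows "vec_subspace (2*n) (symp_compl n m b)"
  using assms unfolding vec_subspace_def symp_compl_def
  by (auto simp: bilin_add_right[OF Jmat_carrier] bilin_smult_right[OF Jmat_carrier])

lemma symp_compl_invariant:
  assumes b: "\<forall>l<2*m. b l \<in> carrier_vec (2*n)" and K: "K \<in> carrier_mat (2*n) (2*n)"
    and orth: "\<forall>l<2*m. \<forall>z\<in>symp_compl n m b. bilin K (b l) z = 0"
  shows "\<forall>z\<in>symp_compl n m b. (Jmat n * K) *\<^sub>v z \<in> symp_compl n m b"
  using assms mult_mat_vec_carrier[OF mult_carrier_mat[OF Jmat_carrier K]]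
  unfolding symp_compl_def by (auto simp: bilin_Jmat_mult_Jmat_right[OF K])

lemma symp_compl_nonzero:
  assumes "\<forall>l<2*m. b l \<in> carrier_vec (2*n)" and "m < n"
  shows "\<exists>z\<in>symp_compl n m b. z \<noteq> 0\<^sub>v (2*n)"
proof -
  define C where "C = mat (2*m) (2*n) (\<lambda>(l,i). (transpose_mat (Jmat n) *\<^sub>v b l) $ i)"
  obtain z where z: "z \<in> carrier_vec (2*n)" "z \<noteq> 0\<^sub>v (2*n)" "C *\<^sub>v z = 0\<^sub>v (2*m)"
    using exists_nonzero_kernel_vec[of C "2*m" "2*n"] assms(2) unfolding C_def by auto
  have "bilin (Jmat n) (b l) z = (C *\<^sub>v z) $ l" if "l < 2*m" for l
  proof -
    have "row C l = transpose_mat (Jmat n) *\<^sub>v b l" using that assms(1) unfolding C_def by auto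
    then show ?thesis
      using that assms(1) z(1) transpose_vec_mult_scalar[OF Jmat_carrier z(1), of "b l"]
      unfolding bilin_def C_def by simp
  qed
  then show ?thesis using z unfolding symp_compl_def by auto
qed

definition adapted_pair :: "nat \<Rightarrow> real mat \<Rightarrow> real vec \<Rightarrow> real vec \<Rightarrow> bool" where
  "adapted_pair n K u v \<longleftrightarrow> bilin K u v = 0 \<and> bilin K u u = bilin K v v \<and>
     (\<forall>z\<in>carrier_vec (2*n). bilin (Jmat n) u z = 0 \<longrightarrow> bilin (Jmat n) v z = 0 \<longrightarrow>
        bilin K u z = 0 \<and> bilin K v z = 0)"

(* K(w,z) = \<omega>(JKw,z), so the rotation form of JK on span{x,y} expresses K there through
   c = \<omega>(x,y); positivity of K then forces c \<noteq> 0. *)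
lemma rotation_pair_adapted:
  assumes K: "pos_def_mat (2*n) K" and x: "x \<in> carrier_vec (2*n)" and y: "y \<in> carrier_vec (2*n)"
    and nz: "x \<noteq> 0\<^sub>v (2*n) \<or> y \<noteq> 0\<^sub>v (2*n)"
    and Kx: "(Jmat n * K) *\<^sub>v x = p \<cdot>\<^sub>v x + (-q) \<cdot>\<^sub>v y"
    and Ky: "(Jmat n * K) *\<^sub>v y = q \<cdot>\<^sub>v x + p \<cdot>\<^sub>v y"
  shows "bilin (Jmat n) x y \<noteq> 0" "adapted_pair n K x y"
proof -
  note Kc = pos_def_matD(1)[OF K] and Ks = pos_def_matD(2)[OF K]
  define c where "c = bilin (Jmat n) x y"
  have lin: "bilin K w z = a * bilin (Jmat n) x z + b * bilin (Jmat n) y z"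
    if "w \<in> carrier_vec (2*n)" "(Jmat n * K) *\<^sub>v w = a \<cdot>\<^sub>v x + b \<cdot>\<^sub>v y" "z \<in> carrier_vec (2*n)" for w z a b
    using bilin_Jmat_mult_Jmat_left[OF Kc Ks that(1,3)] that(2,3) x y
    by (simp add: bilin_add_left[OF Jmat_carrier] bilin_smult_left[OF Jmat_carrier])
  have yx: "bilin (Jmat n) y x = - c" using bilin_Jmat_skew[OF x y] unfolding c_def by simp
  have xx: "bilin K x x = q * c" and yy: "bilin K y y = q * c"
    using lin[OF x Kx x] lin[OF y Ky y] bilin_Jmat_self[OF x] bilin_Jmat_self[OF y] yx
    unfolding c_def by simp_all
  have "bilin K x y = p * c" "bilin K y x = - p * c"
    using lin[OF x Kx y] lin[OF y Ky x] bilin_Jmat_self[OF x] bilin_Jmat_self[OF y] yx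
    unfolding c_def by simp_all
  then have xy: "bilin K x y = 0" using bilin_symmetric[OF Kc Ks x y] by simp
  show "c \<noteq> 0"
  proof
    assume "c = 0"
    then show False using xx yy nz pos_def_matD(3)[OF K x] pos_def_matD(3)[OF K y] by auto
  qed
  have "bilin K x z = 0 \<and> bilin K y z = 0"
    if "z \<in> carrier_vec (2*n)" "bilin (Jmat n) x z = 0" "bilin (Jmat n) y z = 0" for z
    using lin[OF x Kx that(1)] lin[OF y Ky that(1)] that by simp
  then show "adapted_pair n K x y" unfolding adapted_pair_def using xx yy xy by simp
qed

lemma adapted_pair_scale:
  assumes "adapted_pair n K u v" "K \<in> carrier_mat (2*n) (2*n)"
    "u \<in> carrier_vec (2*n)" "v \<in> carrier_vec (2*n)" "s \<noteq> 0" "t \<noteq> 0" "s * s = t * t"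
  shows "adapted_pair n K (s \<cdot>\<^sub>v u) (t \<cdot>\<^sub>v v)"
  using assms unfolding adapted_pair_def
  by (simp add: bilin_smult_left bilin_smult_right bilin_smult_left[OF Jmat_carrier]
      flip: mult.assoc)

lemma exists_symplectic_scaling:
  assumes "(c::real) \<noteq> 0"
  shows "\<exists>s t. s \<noteq> 0 \<and> t \<noteq> 0 \<and> s * s = t * t \<and> s * t * c = 1"
proof (intro exI conjI)
  let ?s = "1 / sqrt \<bar>c\<bar>" and ?t = "sgn c / sqrt \<bar>c\<bar>"
  show "?s \<noteq> 0" "?t \<noteq> 0" "?s * ?s = ?t * ?t" using assms by (simp_all add: sgn_if)
  show "?s * ?t * c = 1" using assms by (cases "c > 0") (auto simp: sgn_if)
qed

definition symp_frame :: "nat \<Rightarrow> nat \<Rightarrow> (nat \<Rightarrow> real vec) \<Rightarrow> bool" where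
  "symp_frame n m b \<longleftrightarrow> (\<forall>i<2*m. b i \<in> carrier_vec (2*n)) \<and>
     (\<forall>i<2*m. \<forall>j<2*m. bilin (Jmat n) (b i) (b j) = J_entry i j)"

(* The last clause is what makes the \<omega>-complement of the frame invariant under J K. *)
definition diagonalizing_frame :: "nat \<Rightarrow> real mat \<Rightarrow> nat \<Rightarrow> (nat \<Rightarrow> real vec) \<Rightarrow> bool" where
  "diagonalizing_frame n K m b \<longleftrightarrow> (\<forall>i<2*m. \<forall>j<2*m. i \<noteq> j \<longrightarrow> bilin K (b i) (b j) = 0) \<and>
     (\<forall>i<m. bilin K (b (2*i)) (b (2*i)) = bilin K (b (2*i+1)) (b (2*i+1))) \<and>
     (\<forall>j<2*m. \<forall>z\<in>symp_compl n m b. bilin K (b j) z = 0)"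

lemma less_2_Suc: "i < 2 * Suc m \<longleftrightarrow> i < 2*m \<or> i = 2*m \<or> i = Suc (2*m)"
  by auto

lemma symp_compl_extend:
  "symp_compl n (Suc m) (b(2*m := u, 2*m+1 := v))
    = {z \<in> symp_compl n m b. bilin (Jmat n) u z = 0 \<and> bilin (Jmat n) v z = 0}"
  unfolding symp_compl_def less_2_Suc by auto

lemma symp_frame_extend:
  assumes b: "symp_frame n m b" and uv: "u \<in> symp_compl n m b" "v \<in> symp_compl n m b"
    and "bilin (Jmat n) u v = 1"
  shows "symp_frame n (Suc m) (b(2*m := u, 2*m+1 := v))"
proof -
  have c: "u \<in> carrier_vec (2*n)" "v \<in> carrier_vec (2*n)" "\<forall>i<2*m. b i \<in> carrier_vec (2*n)"
    using uv b unfolding symp_compl_def symp_frame_def by auto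
  have "bilin (Jmat n) (b i) w = 0" "bilin (Jmat n) w (b i) = 0"
    if "i < 2*m" "w \<in> {u, v}" for i w
    using that uv c bilin_Jmat_skew[of w n "b i"] unfolding symp_compl_def by auto
  moreover have "bilin (Jmat n) v u = -1"
    using bilin_Jmat_skew[OF c(1,2)] assms(4) by simp
  ultimately show ?thesis
    using assms c bilin_Jmat_self[OF c(1)] bilin_Jmat_self[OF c(2)]
    unfolding symp_frame_def less_2_Suc by (auto simp: J_entry_extend)
qed

lemma diagonalizing_frame_extend:
  assumes b: "symp_frame n m b" and K: "K \<in> carrier_mat (2*n) (2*n)" "transpose_mat K = K"
    and D: "diagonalizing_frame n K m b"
    and uv: "u \<in> symp_compl n m b" "v \<in> symp_compl n m b" and adapted: "adapted_pair n K u v"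
  shows "diagonalizing_frame n K (Suc m) (b(2*m := u, 2*m+1 := v))"
proof -
  have c: "u \<in> carrier_vec (2*n)" "v \<in> carrier_vec (2*n)" "\<forall>i<2*m. b i \<in> carrier_vec (2*n)"
    using uv b unfolding symp_compl_def symp_frame_def by auto
  have old: "bilin K (b i) w = 0" "bilin K w (b i) = 0" if "i < 2*m" "w \<in> {u, v}" for i w
    using that uv c D bilin_symmetric[OF K, of w "b i"] unfolding diagonalizing_frame_def by auto
  have new: "bilin K u v = 0" "bilin K v u = 0" "bilin K u u = bilin K v v"
    using adapted bilin_symmetric[OF K c(1,2)] unfolding adapted_pair_def by auto
  have compl: "bilin K w z = 0"
    if "w \<in> {u, v}" "z \<in> symp_compl n m b" "bilin (Jmat n) u z = 0" "bilin (Jmat n) v z = 0" for w z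
    using that adapted unfolding adapted_pair_def symp_compl_def by auto
  show ?thesis
    using D old new compl unfolding diagonalizing_frame_def symp_compl_extend less_2_Suc
    by (auto simp: less_Suc_eq)
qed

lemma commute_Jmat_mult:
  assumes A: "A \<in> carrier_mat (2*n) (2*n)" and B: "B \<in> carrier_mat (2*n) (2*n)"
    and comm: "A * Jmat n * B = B * Jmat n * A"
  shows "(Jmat n * A) * (Jmat n * B) = (Jmat n * B) * (Jmat n * A)"
proof -
  have "(Jmat n * X) * (Jmat n * Y) = Jmat n * (X * Jmat n * Y)"
    if "X \<in> carrier_mat (2*n) (2*n)" "Y \<in> carrier_mat (2*n) (2*n)" for X Y
    using that by (simp add: assoc_mult_mat[of _ "2*n" "2*n" _ "2*n" _ "2*n"] mult_carrier_mat[of _ "2*n" "2*n"])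
  then show ?thesis using A B comm by metis
qed

lemma symp_frame_step:
  assumes A: "pos_def_mat (2*n) A" and B: "pos_def_mat (2*n) B" and comm: "A * Jmat n * B = B * Jmat n * A"
    and b: "symp_frame n m b" "diagonalizing_frame n A m b" "diagonalizing_frame n B m b" and "m < n"
  shows "\<exists>b'. symp_frame n (Suc m) b' \<and> diagonalizing_frame n A (Suc m) b' \<and> diagonalizing_frame n B (Suc m) b'"
proof -
  note Ac = pos_def_matD(1,2)[OF A] and Bc = pos_def_matD(1,2)[OF B]
  have bc: "\<forall>l<2*m. b l \<in> carrier_vec (2*n)" using b(1) unfolding symp_frame_def by simp
  note W = vec_subspace_symp_compl[OF bc]
  have JA: "Jmat n * A \<in> carrier_mat (2*n) (2*n)" and JB: "Jmat n * B \<in> carrier_mat (2*n) (2*n)"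
    using Ac Bc by (auto intro: mult_carrier_mat[OF Jmat_carrier])
  have inv: "\<forall>z\<in>symp_compl n m b. (Jmat n * K) *\<^sub>v z \<in> symp_compl n m b"
    if "K \<in> carrier_mat (2*n) (2*n)" "diagonalizing_frame n K m b" for K
    using symp_compl_invariant[OF bc that(1)] that(2) unfolding diagonalizing_frame_def by simp
  obtain z where "z \<in> symp_compl n m b" "z \<noteq> 0\<^sub>v (2*n)" using symp_compl_nonzero[OF bc \<open>m < n\<close>] by blast
  then obtain x y p q p' q'
    where x: "x \<in> symp_compl n m b" and y: "y \<in> symp_compl n m b" and nz: "x \<noteq> 0\<^sub>v (2*n) \<or> y \<noteq> 0\<^sub>v (2*n)"
      and "(Jmat n * A) *\<^sub>v x = p \<cdot>\<^sub>v x + (-q) \<cdot>\<^sub>v y" "(Jmat n * A) *\<^sub>v y = q \<cdot>\<^sub>v x + p \<cdot>\<^sub>v y"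
        "(Jmat n * B) *\<^sub>v x = p' \<cdot>\<^sub>v x + (-q') \<cdot>\<^sub>v y" "(Jmat n * B) *\<^sub>v y = q' \<cdot>\<^sub>v x + p' \<cdot>\<^sub>v y"
    using commuting_invariant_plane[OF JA JB commute_Jmat_mult[OF Ac(1) Bc(1) comm] W
        inv[OF Ac(1) b(2)] inv[OF Bc(1) b(3)]] by blast
  moreover have xc: "x \<in> carrier_vec (2*n)" and yc: "y \<in> carrier_vec (2*n)"
    using x y unfolding symp_compl_def by auto
  ultimately have c: "bilin (Jmat n) x y \<noteq> 0" and "adapted_pair n A x y" "adapted_pair n B x y"
    using rotation_pair_adapted[OF A xc yc nz] rotation_pair_adapted[OF B xc yc nz] by auto
  moreover obtain s t where st: "s \<noteq> 0" "t \<noteq> 0" "s * s = t * t" "s * t * bilin (Jmat n) x y = 1"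
    using exists_symplectic_scaling[OF c] by blast
  ultimately have "adapted_pair n A (s \<cdot>\<^sub>v x) (t \<cdot>\<^sub>v y)" "adapted_pair n B (s \<cdot>\<^sub>v x) (t \<cdot>\<^sub>v y)"
    using adapted_pair_scale Ac(1) Bc(1) xc yc by auto
  moreover have "s \<cdot>\<^sub>v x \<in> symp_compl n m b" "t \<cdot>\<^sub>v y \<in> symp_compl n m b"
    using W x y unfolding vec_subspace_def by auto
  moreover have "bilin (Jmat n) (s \<cdot>\<^sub>v x) (t \<cdot>\<^sub>v y) = 1"
    using st(4) xc yc by (simp add: bilin_smult_left[OF Jmat_carrier] bilin_smult_right[OF Jmat_carrier] mult_ac)
  ultimately show ?thesis
    using symp_frame_extend[OF b(1)] diagonalizing_frame_extend[OF b(1) Ac b(2)]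
      diagonalizing_frame_extend[OF b(1) Bc b(3)] by blast
qed

lemma symp_frame_exists:
  assumes A: "pos_def_mat (2*n) A" and B: "pos_def_mat (2*n) B" and comm: "A * Jmat n * B = B * Jmat n * A"
  shows "m \<le> n \<Longrightarrow> \<exists>b. symp_frame n m b \<and> diagonalizing_frame n A m b \<and> diagonalizing_frame n B m b"
proof (induction m)
  case 0
  show ?case by (simp add: symp_frame_def diagonalizing_frame_def)
next
  case (Suc m)
  then show ?case using symp_frame_step[OF A B comm] by (meson Suc_le_lessD Suc_leD)
qed

definition frame_mat :: "nat \<Rightarrow> (nat \<Rightarrow> real vec) \<Rightarrow> real mat" where
  "frame_mat n b = mat (2*n) (2*n) (\<lambda>(i,j). b j $ i)"

lemma frame_mat_carrier: "frame_mat n b \<in> carrier_mat (2*n) (2*n)"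
  unfolding frame_mat_def by simp

lemma frame_mat_congruence_index:
  assumes "symp_frame n n b" "K \<in> carrier_mat (2*n) (2*n)" "i < 2*n" "j < 2*n"
  shows "(transpose_mat (frame_mat n b) * K * frame_mat n b) $$ (i,j) = bilin K (b i) (b j)"
proof -
  have "col (frame_mat n b) k = b k" if "k < 2*n" for k
    using assms(1) that unfolding symp_frame_def frame_mat_def by (intro eq_vecI) auto
  then show ?thesis using congruence_index[OF frame_mat_carrier assms(2-4)] assms(3,4) by simp
qed

lemma symp_frame_symplectic:
  assumes "symp_frame n n b"
  shows "symplectic n (frame_mat n b)"
  unfolding symplectic_def
proof
  show "transpose_mat (frame_mat n b) * Jmat n * frame_mat n b = Jmat n"
  proof (rule eq_matI)
    fix i j assume "i < dim_row (Jmat n)" "j < dim_col (Jmat n)"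
    then have i: "i < 2*n" and j: "j < 2*n" by auto
    show "(transpose_mat (frame_mat n b) * Jmat n * frame_mat n b) $$ (i,j) = Jmat n $$ (i,j)"
      unfolding frame_mat_congruence_index[OF assms Jmat_carrier i j] Jmat_index[OF i j]
      using assms i j by (simp add: symp_frame_def)
  qed (use frame_mat_carrier[of n b] in auto)
qed (rule frame_mat_carrier)

lemma symp_frame_nonzero:
  assumes "symp_frame n m b" "i < m"
  shows "b (2*i) \<in> carrier_vec (2*n)" "b (2*i) \<noteq> 0\<^sub>v (2*n)"
proof -
  have bi: "b (2*i) \<in> carrier_vec (2*n)" "b (2*i+1) \<in> carrier_vec (2*n)"
    using assms unfolding symp_frame_def by auto
  have "bilin (Jmat n) (b (2*i)) (b (2*i+1)) = 1"
    using assms unfolding symp_frame_def by (auto simp: J_entry_def)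
  then show "b (2*i) \<in> carrier_vec (2*n)" "b (2*i) \<noteq> 0\<^sub>v (2*n)"
    using bi bilin_zero_left[OF Jmat_carrier bi(2)] by auto
qed

lemma diagonalizing_frame_congruence:
  assumes K: "pos_def_mat (2*n) K" and b: "symp_frame n n b" "diagonalizing_frame n K n b"
  defines "D \<equiv> mat_diag n (\<lambda>i. bilin K (b (2*i)) (b (2*i)))"
  shows "transpose_mat (frame_mat n b) * K * frame_mat n b = kron_mat D (1\<^sub>m 2)"
    and "D \<in> carrier_mat n n" "diagonal_mat D" "\<forall>i<n. D $$ (i,i) > 0"
proof -
  note Kc = pos_def_matD(1)[OF K]
  have pair: "bilin K (b i) (b i) = bilin K (b (2*(i div 2))) (b (2*(i div 2)))" if "i < 2*n" for i
  proof (cases "even i")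
    case False
    then obtain k where "i = 2*k+1" by (auto elim: oddE)
    then show ?thesis using b(2) that unfolding diagonalizing_frame_def by auto
  qed simp
  show "transpose_mat (frame_mat n b) * K * frame_mat n b = kron_mat D (1\<^sub>m 2)"
    unfolding D_def kron_mat_diag_one
  proof (rule eq_matI)
    fix i j assume "i < dim_row (mat_diag (2*n) (\<lambda>i. bilin K (b (2*(i div 2))) (b (2*(i div 2)))))"
      "j < dim_col (mat_diag (2*n) (\<lambda>i. bilin K (b (2*(i div 2))) (b (2*(i div 2)))))"
    then have i: "i < 2*n" and j: "j < 2*n" by (simp_all add: mat_diag_def)
    show "(transpose_mat (frame_mat n b) * K * frame_mat n b) $$ (i,j)
        = mat_diag (2*n) (\<lambda>i. bilin K (b (2*(i div 2))) (b (2*(i div 2)))) $$ (i,j)"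
      unfolding frame_mat_congruence_index[OF b(1) Kc i j] using b(2) i j pair[OF i]
      by (cases "i = j") (simp_all add: mat_diag_def diagonalizing_frame_def)
  qed (use frame_mat_carrier[of n b] in \<open>simp_all add: mat_diag_def\<close>)
  show "D \<in> carrier_mat n n" "diagonal_mat D" unfolding D_def by (auto simp: diagonal_mat_def mat_diag_def)
  show "\<forall>i<n. D $$ (i,i) > 0"
    unfolding D_def using pos_def_matD(3)[OF K] symp_frame_nonzero[OF b(1)] by (simp add: mat_diag_def)
qed

theorem mainTheorem6:
  fixes n :: nat and A B :: "real mat"
  assumes "pos_def_mat (2*n) A" and "pos_def_mat (2*n) B"
  shows "(\<exists>M DA DB. symplectic n M
            \<and> DA \<in> carrier_mat n n \<and> diagonal_mat DA \<and> (\<forall>i<n. DA $$ (i,i) > 0)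
            \<and> DB \<in> carrier_mat n n \<and> diagonal_mat DB \<and> (\<forall>i<n. DB $$ (i,i) > 0)
            \<and> transpose_mat M * A * M = kron_mat DA (1\<^sub>m 2)
            \<and> transpose_mat M * B * M = kron_mat DB (1\<^sub>m 2))
         \<longleftrightarrow> A * Jmat n * B = B * Jmat n * A"
    (is "?diag \<longleftrightarrow> ?comm")
proof
  assume ?diag
  then show ?comm
    using symplectic_diagonalization_imp_commute pos_def_matD(1)[OF assms(1)] pos_def_matD(1)[OF assms(2)]
    by blast
next
  assume ?comm
  then obtain b where b: "symp_frame n n b" "diagonalizing_frame n A n b" "diagonalizing_frame n B n b"
    using symp_frame_exists[OF assms] by blast
  then show ?diag
    using symp_frame_symplectic[OF b(1)] diagonalizing_frame_congruence[OF assms(1) b(1,2)]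
      diagonalizing_frame_congruence[OF assms(2) b(1,3)] by blast
qed

end
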